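(* Let $A\in\mathbb{R}^{n\times n}$, $C\in\mathbb{R}^{p\times n}$ and $s\in\mathbb{N}$. If $(A,C)$ is not $s$-sparse detectable, then for every $v\in\mathbb{N}$ and every matrix $D\in\mathbb{R}^{v\times p}$, $(A,C)$ is not $s$-sparse detectable with respect to $D$.
   Context: A pair $(A,M)$ is detectable if every eigenvalue of $A$ of modulus $\ge1$ is observable, i.e. $Mw\ne0$ for every (complex) eigenvector $w$ of $A$ whose eigenvalue has modulus $\ge 1$. Let $\mathbf{E}_p=\{\mathbf{e}_1,\dots,\mathbf{e}_p\}$ be the standard basis of $\mathbb{R}^p$. For $D\in\mathbb{R}^{v\times p}$ and $k\in\mathbb{N}$, let $\mathbf{P}_k(D)$ be the set of all real matrices $L$ with $v$ columns (any number of rows) such that $\ker(L)=D(\mathrm{span}\,V)$ for some $V\subseteq\mathbf{E}_p$ with $|V|\le k$. $(A,C)$ is $k$-sparse detectable with respect to $D$ if $(A,LDC)$ is detectable for every $L\in\mathbf{P}_k(D)$; $(A,C)$ is $k$-sparse detectable if it is $k$-sparse detectable with respect to $I_p$. *)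

theory Defs
  imports "Jordan_Normal_Form.Matrix"
begin

definition cmat :: "real mat \<Rightarrow> complex mat" where
  "cmat M = map_mat complex_of_real M"

definition detectable :: "real mat \<Rightarrow> real mat \<Rightarrow> bool" where
  "detectable A M \<longleftrightarrow>
     (\<forall>(w :: complex vec) (lam :: complex).
        w \<in> carrier_vec (dim_row A) \<and> w \<noteq> 0\<^sub>v (dim_row A) \<and>
        cmat A *\<^sub>v w = lam \<cdot>\<^sub>v w \<and> cmod lam \<ge> 1
        \<longrightarrow> cmat M *\<^sub>v w \<noteq> 0\<^sub>v (dim_row M))"

text \<open>D (span V) for V a set of standard basis vectors of R^p, given by its index set
  I \<subseteq> {0..<p}: span of {e_i | i \<in> I} is the set of vectors in R^p supported on I.\<close>
definition image_span_basis :: "real mat \<Rightarrow> nat set \<Rightarrow> real vec set" where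
  "image_span_basis D I =
     {D *\<^sub>v y | y. y \<in> carrier_vec (dim_col D) \<and> (\<forall>i < dim_col D. i \<notin> I \<longrightarrow> y $ i = 0)}"

definition mat_kernel :: "real mat \<Rightarrow> real vec set" where
  "mat_kernel L = {x \<in> carrier_vec (dim_col L). L *\<^sub>v x = 0\<^sub>v (dim_row L)}"

definition Pk :: "nat \<Rightarrow> real mat \<Rightarrow> real mat set" where
  "Pk k D = {L. dim_col L = dim_row D \<and>
     (\<exists>I. I \<subseteq> {0..<dim_col D} \<and> card I \<le> k \<and> mat_kernel L = image_span_basis D I)}"

definition sparse_detectable_wrt :: "nat \<Rightarrow> real mat \<Rightarrow> real mat \<Rightarrow> real mat \<Rightarrow> bool" where
  "sparse_detectable_wrt k A C D \<longleftrightarrow> (\<forall>L \<in> Pk k D. detectable A (L * D * C))"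

definition sparse_detectable :: "nat \<Rightarrow> real mat \<Rightarrow> real mat \<Rightarrow> bool" where
  "sparse_detectable k A C \<longleftrightarrow> sparse_detectable_wrt k A C (1\<^sub>m (dim_row C))"

end

theory Submission imports Defs begin

text \<open>A witness of non-detectability of \<open>(A, C)\<close> is an eigenvector \<open>w\<close> of an eigenvalue of
  modulus \<open>\<ge> 1\<close> together with an \<open>L\<close> whose kernel is spanned by at most \<open>s\<close> standard basis
  vectors \<open>e\<^sub>i\<close>, \<open>i \<in> I\<close>, such that \<open>L C w = 0\<close>. Then \<open>C w\<close> (real and imaginary part) lies in
  that span, so \<open>D C w\<close> lies in \<open>D(span {e\<^sub>i | i \<in> I})\<close>, and \<open>w\<close> is also a witness for
  \<open>(A, L' D C)\<close> as soon as \<open>L'\<close> has exactly this kernel. Such an \<open>L'\<close> exists because every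
  finitely generated subspace is a kernel: a generator \<open>d\<close> is added to the kernel of \<open>L\<close> by
  composing \<open>L\<close> with the projection orthogonal to \<open>L d\<close>.\<close>

definition perp_proj :: "nat \<Rightarrow> real vec \<Rightarrow> real mat" where
  "perp_proj r u = mat r r (\<lambda>(i, j). (if i = j then u \<bullet> u else 0) - u $ i * u $ j)"

lemma perp_proj_carrier: "perp_proj r u \<in> carrier_mat r r"
  by (simp add: perp_proj_def)

lemma perp_proj_mult_vec:
  assumes u: "u \<in> carrier_vec r" and y: "y \<in> carrier_vec r"
  shows "perp_proj r u *\<^sub>v y = (u \<bullet> u) \<cdot>\<^sub>v y - (u \<bullet> y) \<cdot>\<^sub>v u"
proof (rule eq_vecI)
  fix i assume "i < dim_vec ((u \<bullet> u) \<cdot>\<^sub>v y - (u \<bullet> y) \<cdot>\<^sub>v u)"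
  hence i: "i < r" using u by simp
  have "(perp_proj r u *\<^sub>v y) $ i
      = (\<Sum>j<r. (if i = j then u \<bullet> u else 0) * y $ j) - u $ i * (\<Sum>j<r. u $ j * y $ j)"
    using i y by (simp add: perp_proj_def mult_mat_vec_def scalar_prod_def atLeast0LessThan
        left_diff_distrib sum_subtractf sum_distrib_left mult.assoc)
  also have "(\<Sum>j<r. (if i = j then u \<bullet> u else 0) * y $ j) = (u \<bullet> u) * y $ i"
    using i by (simp add: if_distrib[of "\<lambda>a. a * _"] cong: if_cong)
  also have "(\<Sum>j<r. u $ j * y $ j) = u \<bullet> y"
    using y by (simp add: scalar_prod_def atLeast0LessThan)
  finally show "(perp_proj r u *\<^sub>v y) $ i = ((u \<bullet> u) \<cdot>\<^sub>v y - (u \<bullet> y) \<cdot>\<^sub>v u) $ i"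
    using i u y by (simp add: mult.commute)
qed (use u in \<open>simp add: perp_proj_def\<close>)

lemma perp_proj_mult_vec_eq_0_iff:
  assumes u: "u \<in> carrier_vec r" "u \<noteq> 0\<^sub>v r" and y: "y \<in> carrier_vec r"
  shows "perp_proj r u *\<^sub>v y = 0\<^sub>v r \<longleftrightarrow> (\<exists>c. y = c \<cdot>\<^sub>v u)"
proof
  have uu: "u \<bullet> u \<noteq> 0" using u by (metis conjugate_square_eq_0_vec vec_conjugate_real)
  assume "perp_proj r u *\<^sub>v y = 0\<^sub>v r"
  hence "(u \<bullet> u) \<cdot>\<^sub>v y - (u \<bullet> y) \<cdot>\<^sub>v u = 0\<^sub>v r"
    using u y by (simp add: perp_proj_mult_vec)
  hence "(u \<bullet> u) \<cdot>\<^sub>v y = (u \<bullet> y) \<cdot>\<^sub>v u"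
    using u y by (auto simp: vec_eq_iff)
  hence "y = ((u \<bullet> y) / (u \<bullet> u)) \<cdot>\<^sub>v u"
    using uu by (auto simp: vec_eq_iff field_simps)
  thus "\<exists>c. y = c \<cdot>\<^sub>v u" ..
next
  assume "\<exists>c. y = c \<cdot>\<^sub>v u"
  then obtain c where c: "y = c \<cdot>\<^sub>v u" ..
  have "perp_proj r u *\<^sub>v y = (u \<bullet> u) \<cdot>\<^sub>v (c \<cdot>\<^sub>v u) - (c * (u \<bullet> u)) \<cdot>\<^sub>v u"
    using u y by (simp add: perp_proj_mult_vec c)
  also have "\<dots> = 0\<^sub>v r"
    using u by (intro eq_vecI) simp_all
  finally show "perp_proj r u *\<^sub>v y = 0\<^sub>v r" .
qed

lemma mat_kernel_add_line_eq:
  fixes L :: "real mat"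
  assumes L: "L \<in> carrier_mat r v" and d: "d \<in> carrier_vec v"
  shows "{y + c \<cdot>\<^sub>v d | y c. y \<in> mat_kernel L}
    = {x \<in> carrier_vec v. \<exists>c. L *\<^sub>v x = c \<cdot>\<^sub>v (L *\<^sub>v d)}"
proof (rule Set.set_eqI, rule iffI)
  fix x assume "x \<in> {y + c \<cdot>\<^sub>v d | y c. y \<in> mat_kernel L}"
  then obtain y c where x: "x = y + c \<cdot>\<^sub>v d" and y: "y \<in> carrier_vec v" "L *\<^sub>v y = 0\<^sub>v r"
    using L by (auto simp: mat_kernel_def)
  have "L *\<^sub>v x = L *\<^sub>v y + c \<cdot>\<^sub>v (L *\<^sub>v d)"
    unfolding x using L y d by (simp add: mult_add_distrib_mat_vec mult_mat_vec)
  also have "\<dots> = c \<cdot>\<^sub>v (L *\<^sub>v d)"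
    using L d y by simp
  finally show "x \<in> {x \<in> carrier_vec v. \<exists>c. L *\<^sub>v x = c \<cdot>\<^sub>v (L *\<^sub>v d)}"
    using x y d by auto
next
  fix x assume "x \<in> {x \<in> carrier_vec v. \<exists>c. L *\<^sub>v x = c \<cdot>\<^sub>v (L *\<^sub>v d)}"
  then obtain c where x: "x \<in> carrier_vec v" and Lx: "L *\<^sub>v x = c \<cdot>\<^sub>v (L *\<^sub>v d)"
    by blast
  have "L *\<^sub>v (x - c \<cdot>\<^sub>v d) = L *\<^sub>v x - c \<cdot>\<^sub>v (L *\<^sub>v d)"
    using L x d by (simp add: mult_minus_distrib_mat_vec mult_mat_vec)
  also have "\<dots> = 0\<^sub>v r"
    unfolding Lx using L d by simp
  finally have "x - c \<cdot>\<^sub>v d \<in> mat_kernel L"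
    using L x d by (simp add: mat_kernel_def)
  moreover have "x = (x - c \<cdot>\<^sub>v d) + c \<cdot>\<^sub>v d"
    using x d by auto
  ultimately show "x \<in> {y + c \<cdot>\<^sub>v d | y c. y \<in> mat_kernel L}"
    by blast
qed

lemma mat_kernel_add_line:
  fixes L :: "real mat"
  assumes L: "L \<in> carrier_mat r v" and d: "d \<in> carrier_vec v"
  shows "\<exists>L'. dim_col L' = v \<and> mat_kernel L' = {y + c \<cdot>\<^sub>v d | y c. y \<in> mat_kernel L}"
proof (cases "L *\<^sub>v d = 0\<^sub>v r")
  case True
  have "c \<cdot>\<^sub>v (L *\<^sub>v d) = 0\<^sub>v r" for c :: real
    unfolding True by (rule eq_vecI) simp_all
  hence "mat_kernel L = {x \<in> carrier_vec v. \<exists>c. L *\<^sub>v x = c \<cdot>\<^sub>v (L *\<^sub>v d)}"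
    using L by (auto simp: mat_kernel_def)
  hence "mat_kernel L = {y + c \<cdot>\<^sub>v d | y c. y \<in> mat_kernel L}"
    unfolding mat_kernel_add_line_eq[OF L d] .
  thus ?thesis
    using L by blast
next
  case False
  define u where "u = L *\<^sub>v d"
  have u: "u \<in> carrier_vec r" "u \<noteq> 0\<^sub>v r"
    using L d False by (simp_all add: u_def)
  have PL: "perp_proj r u * L \<in> carrier_mat r v"
    using mult_carrier_mat[OF perp_proj_carrier L] .
  have kernel_iff: "perp_proj r u * L *\<^sub>v x = 0\<^sub>v r \<longleftrightarrow> (\<exists>c. L *\<^sub>v x = c \<cdot>\<^sub>v u)"
    if x: "x \<in> carrier_vec v" for x
  proof -
    have "perp_proj r u * L *\<^sub>v x = perp_proj r u *\<^sub>v (L *\<^sub>v x)"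
      using perp_proj_carrier L x by (rule assoc_mult_mat_vec)
    thus ?thesis
      using perp_proj_mult_vec_eq_0_iff[OF u mult_mat_vec_carrier[OF L x]] by simp
  qed
  have "mat_kernel (perp_proj r u * L)
      = {x \<in> carrier_vec v. perp_proj r u * L *\<^sub>v x = 0\<^sub>v r}"
    using L by (simp add: mat_kernel_def perp_proj_def)
  also have "\<dots> = {x \<in> carrier_vec v. \<exists>c. L *\<^sub>v x = c \<cdot>\<^sub>v u}"
    using kernel_iff by auto
  also have "\<dots> = {y + c \<cdot>\<^sub>v d | y c. y \<in> mat_kernel L}"
    unfolding mat_kernel_add_line_eq[OF L d] u_def ..
  finally show ?thesis
    using L by (intro exI[of _ "perp_proj r u * L"]) simp
qed

lemma mult_mat_vec_unit_vec:
  fixes D :: "'a :: semiring_1 mat"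
  assumes "D \<in> carrier_mat v p" and "j < p"
  shows "D *\<^sub>v unit_vec p j = col D j"
  using assms carrier_matD[OF assms(1)] by (intro eq_vecI) (auto simp: col_def)

lemma image_span_basis_insert:
  fixes D :: "real mat"
  assumes D: "D \<in> carrier_mat v p" and j: "j < p"
  shows "image_span_basis D (insert j I) = {y + c \<cdot>\<^sub>v col D j | y c. y \<in> image_span_basis D I}"
proof (rule Set.set_eqI, rule iffI)
  fix x assume "x \<in> image_span_basis D (insert j I)"
  then obtain z where x: "x = D *\<^sub>v z" and z: "z \<in> carrier_vec p"
    and supp: "\<forall>i < p. i \<notin> insert j I \<longrightarrow> z $ i = 0"
    unfolding image_span_basis_def using D by auto
  define z' where "z' = vec p (\<lambda>i. if i = j then 0 else z $ i)"
  have z': "z' \<in> carrier_vec p"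
    by (simp add: z'_def)
  have z_split: "z = z' + z $ j \<cdot>\<^sub>v unit_vec p j"
    using z j by (intro eq_vecI) (auto simp: z'_def)
  have "x = D *\<^sub>v z' + z $ j \<cdot>\<^sub>v col D j"
    unfolding x using D z' j
    by (subst z_split) (simp add: mult_add_distrib_mat_vec mult_mat_vec mult_mat_vec_unit_vec)
  moreover have "D *\<^sub>v z' \<in> image_span_basis D I"
    unfolding image_span_basis_def using D z' supp by (auto simp: z'_def)
  ultimately show "x \<in> {y + c \<cdot>\<^sub>v col D j | y c. y \<in> image_span_basis D I}"
    by blast
next
  fix x assume "x \<in> {y + c \<cdot>\<^sub>v col D j | y c. y \<in> image_span_basis D I}"
  then obtain z c where x: "x = D *\<^sub>v z + c \<cdot>\<^sub>v col D j" and z: "z \<in> carrier_vec p"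
    and supp: "\<forall>i < p. i \<notin> I \<longrightarrow> z $ i = 0"
    unfolding image_span_basis_def using D by auto
  define z' where "z' = z + c \<cdot>\<^sub>v unit_vec p j"
  have z': "z' \<in> carrier_vec p"
    using z by (simp add: z'_def)
  have "x = D *\<^sub>v z'"
    using D z j by (simp add: x z'_def mult_add_distrib_mat_vec mult_mat_vec mult_mat_vec_unit_vec)
  moreover have "\<forall>i < p. i \<notin> insert j I \<longrightarrow> z' $ i = 0"
    using supp z j by (simp add: z'_def)
  ultimately show "x \<in> image_span_basis D (insert j I)"
    unfolding image_span_basis_def using D z' by auto
qed

lemma image_span_basis_insert_out_of_range:
  assumes "D \<in> carrier_mat v p" and "p \<le> j"
  shows "image_span_basis D (insert j I) = image_span_basis D I"
  using assms unfolding image_span_basis_def by auto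

lemma image_span_basis_empty:
  assumes D: "D \<in> carrier_mat v p"
  shows "image_span_basis D {} = {0\<^sub>v v}"
proof -
  have "image_span_basis D {} = (\<lambda>z. D *\<^sub>v z) ` {z \<in> carrier_vec p. \<forall>i < p. z $ i = 0}"
    using D unfolding image_span_basis_def by auto
  also have "{z \<in> carrier_vec p. \<forall>i < p. z $ i = 0} = {0\<^sub>v p :: real vec}"
    by auto
  also have "(\<lambda>z. D *\<^sub>v z) ` {0\<^sub>v p} = {D *\<^sub>v 0\<^sub>v p}"
    by simp
  also have "D *\<^sub>v 0\<^sub>v p = 0\<^sub>v v"
    using D by (intro eq_vecI) auto
  finally show ?thesis .
qed

lemma mat_kernel_one_mat: "mat_kernel (1\<^sub>m v) = {0\<^sub>v v}"
  by (auto simp: mat_kernel_def)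

lemma exists_mat_kernel_eq_image_span_basis:
  fixes D :: "real mat"
  assumes D: "D \<in> carrier_mat v p" and "finite I"
  shows "\<exists>L. dim_col L = v \<and> mat_kernel L = image_span_basis D I"
  using \<open>finite I\<close>
proof (induction I rule: finite_induct)
  case empty
  show ?case
    using D by (intro exI[of _ "1\<^sub>m v"]) (simp add: mat_kernel_one_mat image_span_basis_empty)
next
  case (insert j I)
  then obtain L where dim_L: "dim_col L = v" and kernel_L: "mat_kernel L = image_span_basis D I"
    by blast
  have L: "L \<in> carrier_mat (dim_row L) v"
    using dim_L by blast
  show ?case
  proof (cases "j < p")
    case True
    show ?thesis
      using mat_kernel_add_line[OF L, of "col D j"] D True
      by (simp add: image_span_basis_insert[OF D True] kernel_L)
  next
    case False
    hence "image_span_basis D (insert j I) = image_span_basis D I"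
      by (simp add: image_span_basis_insert_out_of_range[OF D])
    thus ?thesis
      using dim_L kernel_L by auto
  qed
qed

lemma mat_kernel_mult:
  fixes A B :: "real mat"
  assumes A: "A \<in> carrier_mat r m" and B: "B \<in> carrier_mat m n"
  shows "mat_kernel (A * B) = {x \<in> carrier_vec n. B *\<^sub>v x \<in> mat_kernel A}"
  using A B by (auto simp: mat_kernel_def)

lemma mult_mat_vec_mem_image_span_basis:
  assumes D: "D \<in> carrier_mat v p" and y: "y \<in> image_span_basis (1\<^sub>m p) I"
  shows "D *\<^sub>v y \<in> image_span_basis D I"
  using D y unfolding image_span_basis_def by auto

lemma mat_kernel_subset_if_sparse_kernels:
  fixes L L' C D :: "real mat"
  assumes L: "L \<in> carrier_mat r p" and L': "L' \<in> carrier_mat r' v"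
    and D: "D \<in> carrier_mat v p" and C: "C \<in> carrier_mat p n"
    and kernel_L: "mat_kernel L \<subseteq> image_span_basis (1\<^sub>m p) I"
    and kernel_L': "image_span_basis D I \<subseteq> mat_kernel L'"
  shows "mat_kernel (L * C) \<subseteq> mat_kernel (L' * D * C)"
proof
  fix x assume "x \<in> mat_kernel (L * C)"
  hence x: "x \<in> carrier_vec n" and Cx: "C *\<^sub>v x \<in> image_span_basis (1\<^sub>m p) I"
    using L C kernel_L by (auto simp: mat_kernel_mult)
  have "D *\<^sub>v (C *\<^sub>v x) \<in> mat_kernel L'"
    using kernel_L' mult_mat_vec_mem_image_span_basis[OF D Cx] ..
  hence "C *\<^sub>v x \<in> mat_kernel (L' * D)"
    using L' D C x by (simp add: mat_kernel_mult[OF L' D])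
  thus "x \<in> mat_kernel (L' * D * C)"
    using x by (simp add: mat_kernel_mult[OF mult_carrier_mat[OF L' D] C])
qed

lemma cmat_mult_vec_eq_0_iff:
  fixes M :: "real mat"
  assumes w: "w \<in> carrier_vec (dim_col M)"
  shows "cmat M *\<^sub>v w = 0\<^sub>v (dim_row M)
    \<longleftrightarrow> map_vec Re w \<in> mat_kernel M \<and> map_vec Im w \<in> mat_kernel M"
proof -
  have re: "map_vec Re (cmat M *\<^sub>v w) = M *\<^sub>v map_vec Re w"
    using w by (intro eq_vecI) (auto simp: cmat_def mult_mat_vec_def scalar_prod_def)
  have im: "map_vec Im (cmat M *\<^sub>v w) = M *\<^sub>v map_vec Im w"
    using w by (intro eq_vecI) (auto simp: cmat_def mult_mat_vec_def scalar_prod_def)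
  have "cmat M *\<^sub>v w = 0\<^sub>v (dim_row M)
      \<longleftrightarrow> map_vec Re (cmat M *\<^sub>v w) = 0\<^sub>v (dim_row M) \<and> map_vec Im (cmat M *\<^sub>v w) = 0\<^sub>v (dim_row M)"
    by (auto simp: vec_eq_iff complex_eq_iff cmat_def)
  thus ?thesis
    unfolding re im mat_kernel_def using w by simp
qed

lemma detectable_if_mat_kernel_subset:
  assumes dims: "dim_col M = dim_row A" "dim_col M' = dim_row A"
    and kernels: "mat_kernel M \<subseteq> mat_kernel M'" and "detectable A M'"
  shows "detectable A M"
  unfolding detectable_def
proof (intro allI impI notI)
  fix w lam assume eigen: "w \<in> carrier_vec (dim_row A) \<and> w \<noteq> 0\<^sub>v (dim_row A) \<and>
    cmat A *\<^sub>v w = lam \<cdot>\<^sub>v w \<and> 1 \<le> cmod lam"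
  moreover assume "cmat M *\<^sub>v w = 0\<^sub>v (dim_row M)"
  ultimately have "cmat M' *\<^sub>v w = 0\<^sub>v (dim_row M')"
    using kernels dims cmat_mult_vec_eq_0_iff[of w M] cmat_mult_vec_eq_0_iff[of w M'] by auto
  thus False
    using \<open>detectable A M'\<close> eigen unfolding detectable_def by blast
qed

theorem lemma1:
  fixes A C :: "real mat" and n p s :: nat
  assumes "A \<in> carrier_mat n n" and "C \<in> carrier_mat p n"
    and "\<not> sparse_detectable s A C"
  shows "\<forall>(v::nat) (D::real mat). D \<in> carrier_mat v p \<longrightarrow> \<not> sparse_detectable_wrt s A C D"
proof (intro allI impI notI)
  fix v and D :: "real mat"
  assume D: "D \<in> carrier_mat v p" and detectable_D: "sparse_detectable_wrt s A C D"
  have A: "A \<in> carrier_mat n n" and C: "C \<in> carrier_mat p n" by fact+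
  obtain L I where "dim_col L = p" and I: "I \<subseteq> {0..<p}" "card I \<le> s"
    and kernel_L: "mat_kernel L = image_span_basis (1\<^sub>m p) I"
    and not_detectable: "\<not> detectable A (L * 1\<^sub>m p * C)"
    using assms(3) C unfolding sparse_detectable_def sparse_detectable_wrt_def Pk_def by auto
  hence L: "L \<in> carrier_mat (dim_row L) p" by blast
  obtain L' where "dim_col L' = v" and kernel_L': "mat_kernel L' = image_span_basis D I"
    using exists_mat_kernel_eq_image_span_basis[OF D finite_subset[OF I(1)]] by blast
  hence L': "L' \<in> carrier_mat (dim_row L') v" by blast
  have "mat_kernel (L * 1\<^sub>m p * C) \<subseteq> mat_kernel (L' * D * C)"
    using mat_kernel_subset_if_sparse_kernels[OF L L' D C, of I] kernel_L kernel_L' L by simp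
  moreover have "L' \<in> Pk s D"
    using L' D I kernel_L' unfolding Pk_def by auto
  hence "detectable A (L' * D * C)"
    using detectable_D unfolding sparse_detectable_wrt_def by blast
  moreover have "dim_col (L * 1\<^sub>m p * C) = dim_row A" "dim_col (L' * D * C) = dim_row A"
    using A C by simp_all
  ultimately have "detectable A (L * 1\<^sub>m p * C)"
    by (blast intro: detectable_if_mat_kernel_subset)
  thus False
    using not_detectable by contradiction
qed

end
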